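(* Let $p\neq q$ be primes, $G_1$ a finite abelian group of order $p^e$ and $G_2$ a finite abelian group of order $q^f$. Let $R_i=\mathbf{Z}[G_i]$, $S_i$ the integral closure of $R_i$ in $\mathbf{Q}[G_i]$, and $I_i=\{s\in S_i: sS_i\subseteq R_i\}$ the conductor of $S_i$ into $R_i$. Regarding all tensor products over $\mathbf{Z}$ as subgroups of $S_1\otimes S_2$, one has $$I_1\otimes I_2=(R_1\otimes I_2)\cap(I_1\otimes R_2).$$ *)

theory Defs
  imports Complex_Main "HOL-Computational_Algebra.Primes" "HOL-Library.Cardinality"
begin

text \<open>The rational group algebra Q[G] of a finite abelian group G (a finite type of
  class ab_group_add, written additively) is modelled as the functions G \<Rightarrow> rat,
  with convolution as multiplication.\<close>

definition gr_mult :: "('a::{ab_group_add,finite} \<Rightarrow> rat) \<Rightarrow> ('a \<Rightarrow> rat) \<Rightarrow> ('a \<Rightarrow> rat)" where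
  "gr_mult x y = (\<lambda>g. \<Sum>h\<in>UNIV. x h * y (g - h))"

definition gr_one :: "'a::{ab_group_add,finite} \<Rightarrow> rat" where
  "gr_one = (\<lambda>g. if g = 0 then 1 else 0)"

primrec gr_pow :: "('a::{ab_group_add,finite} \<Rightarrow> rat) \<Rightarrow> nat \<Rightarrow> ('a \<Rightarrow> rat)" where
  "gr_pow x 0 = gr_one"
| "gr_pow x (Suc n) = gr_mult x (gr_pow x n)"

definition ZG :: "('a::{ab_group_add,finite} \<Rightarrow> rat) set" where
  "ZG = {x. \<forall>g. x g \<in> \<int>}"

definition integral_over :: "('a::{ab_group_add,finite} \<Rightarrow> rat) set \<Rightarrow> ('a \<Rightarrow> rat) \<Rightarrow> bool" where
  "integral_over R s \<longleftrightarrow> (\<exists>n c. (\<forall>k<n. c k \<in> R) \<and>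
      (\<forall>g. gr_pow s n g + (\<Sum>k<n. gr_mult (c k) (gr_pow s k) g) = 0))"

definition SG :: "('a::{ab_group_add,finite} \<Rightarrow> rat) set" where
  "SG = {s. integral_over ZG s}"

definition conductor :: "('a::{ab_group_add,finite} \<Rightarrow> rat) set" where
  "conductor = {s \<in> SG. \<forall>t\<in>SG. gr_mult s t \<in> ZG}"

text \<open>Image of A \<otimes>_Z B inside Q[G1] \<otimes>_Q Q[G2] = Q[G1 \<times> G2]:
  the additive subgroup generated by the elementary tensors a \<otimes> b,
  where (a \<otimes> b)(g,h) = a g * b h.\<close>
definition tensor :: "('a::{ab_group_add,finite} \<Rightarrow> rat) set \<Rightarrow> ('b::{ab_group_add,finite} \<Rightarrow> rat) set
     \<Rightarrow> ('a \<times> 'b \<Rightarrow> rat) set" where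
  "tensor A B = {t. \<exists>n (k::nat \<Rightarrow> int) a b. (\<forall>i<n. a i \<in> A \<and> b i \<in> B) \<and>
      t = (\<lambda>x. \<Sum>i<n. of_int (k i) * a i (fst x) * b i (snd x))}"

end

theory Submission
  imports Defs
begin

text \<open>If \<open>s \<in> \<rat>[G]\<close> is integral over \<open>\<int>[G]\<close> of degree \<open>n\<close>, the translates of
  \<open>1, s, \<dots>, s\<^sup>n\<^sup>-\<^sup>1\<close> span a lattice in \<open>\<rat>[G]\<close> containing \<open>\<int>[G]\<close> and stable under
  multiplication by \<open>g\<^sup>-\<^sup>1 s\<close>. A linear map preserving such a lattice has integral trace,
  and the trace of multiplication by \<open>g\<^sup>-\<^sup>1 s\<close> is \<open>|G| s(g)\<close>. Hence \<open>|G| S \<subseteq> \<int>[G]\<close>,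
  i.e. \<open>|G| R \<subseteq> I\<close>. For \<open>x \<in> (R\<^sub>1 \<otimes> I\<^sub>2) \<inter> (I\<^sub>1 \<otimes> R\<^sub>2)\<close> this gives
  \<open>|G\<^sub>1| x, |G\<^sub>2| x \<in> I\<^sub>1 \<otimes> I\<^sub>2\<close>, and since \<open>p\<^sup>e\<close> and \<open>q\<^sup>f\<close> are coprime, a Bezout
  combination of the two yields \<open>x\<close> itself. The other inclusion is \<open>I\<^sub>i \<subseteq> R\<^sub>i\<close>.\<close>

section \<open>Finitely generated subgroups of \<open>\<rat>\<^sup>I\<close>\<close>

definition int_span :: "'k set \<Rightarrow> ('k \<Rightarrow> 'i \<Rightarrow> rat) \<Rightarrow> ('i \<Rightarrow> rat) set" where
  "int_span K v = {x. \<exists>c::'k \<Rightarrow> int. x = (\<lambda>i. \<Sum>k\<in>K. of_int (c k) * v k i)}"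

lemma int_span_memI: "x = (\<lambda>i. \<Sum>k\<in>K. of_int (c k) * v k i) \<Longrightarrow> x \<in> int_span K v"
  unfolding int_span_def by blast

lemma int_span_generator:
  assumes "finite K" "k \<in> K"
  shows "v k \<in> int_span K v"
proof -
  have "(\<Sum>k'\<in>K. of_int (if k' = k then 1 else 0) * v k' i) = (\<Sum>k'\<in>K. if k' = k then v k' i else 0)"
    for i by (rule sum.cong) auto
  then have "v k = (\<lambda>i. \<Sum>k'\<in>K. of_int (if k' = k then 1 else 0) * v k' i)"
    using assms by simp
  then show ?thesis
    by (rule int_span_memI)
qed

lemma int_span_lincomb:
  fixes c :: "'j \<Rightarrow> int" and K :: "'k set"
  assumes "finite J" "\<And>j. j \<in> J \<Longrightarrow> f j \<in> int_span K v"
  shows "(\<lambda>i. \<Sum>j\<in>J. of_int (c j) * f j i) \<in> int_span K v"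
proof -
  have "\<forall>j\<in>J. \<exists>d::'k \<Rightarrow> int. f j = (\<lambda>i. \<Sum>k\<in>K. of_int (d k) * v k i)"
    using assms(2) unfolding int_span_def by blast
  then obtain d where d: "\<forall>j\<in>J. f j = (\<lambda>i. \<Sum>k\<in>K. of_int (d j k) * v k i)"
    by metis
  have "(\<Sum>j\<in>J. of_int (c j) * f j i) = (\<Sum>k\<in>K. of_int (\<Sum>j\<in>J. c j * d j k) * v k i)" for i
  proof -
    have "(\<Sum>j\<in>J. of_int (c j) * f j i) = (\<Sum>j\<in>J. \<Sum>k\<in>K. of_int (c j) * (of_int (d j k) * v k i))"
      using d by (simp add: sum_distrib_left)
    also have "\<dots> = (\<Sum>k\<in>K. \<Sum>j\<in>J. of_int (c j) * (of_int (d j k) * v k i))"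
      by (rule sum.swap)
    finally show ?thesis
      by (simp add: sum_distrib_right mult.assoc)
  qed
  then have "(\<lambda>i. \<Sum>j\<in>J. of_int (c j) * f j i) = (\<lambda>i. \<Sum>k\<in>K. of_int (\<Sum>j\<in>J. c j * d j k) * v k i)"
    by (rule ext)
  then show ?thesis
    by (rule int_span_memI)
qed

lemma int_span_add:
  assumes "x \<in> int_span K v" "y \<in> int_span K v"
  shows "(\<lambda>i. x i + y i) \<in> int_span K v"
proof -
  obtain c d where "x = (\<lambda>i. \<Sum>k\<in>K. of_int (c k) * v k i)" "y = (\<lambda>i. \<Sum>k\<in>K. of_int (d k) * v k i)"
    using assms unfolding int_span_def by blast
  then have "(\<lambda>i. x i + y i) = (\<lambda>i. \<Sum>k\<in>K. of_int (c k + d k) * v k i)"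
    by (simp add: sum.distrib distrib_right)
  then show ?thesis
    by (rule int_span_memI)
qed

lemma int_span_int_smult:
  assumes "x \<in> int_span K v"
  shows "(\<lambda>i. of_int m * x i) \<in> int_span K v"
proof -
  obtain c where "x = (\<lambda>i. \<Sum>k\<in>K. of_int (c k) * v k i)"
    using assms unfolding int_span_def by blast
  then have "(\<lambda>i. of_int m * x i) = (\<lambda>i. \<Sum>k\<in>K. of_int (m * c k) * v k i)"
    by (simp add: sum_distrib_left mult.assoc)
  then show ?thesis
    by (rule int_span_memI)
qed

lemma int_span_subset:
  assumes "finite K" "\<And>k. k \<in> K \<Longrightarrow> v k \<in> int_span J b"
  shows "int_span K v \<subseteq> int_span J b"
  using int_span_lincomb[OF assms(1), of v J b] assms(2) unfolding int_span_def[of K v] by auto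

lemma int_span_coordinate_vanishes:
  assumes "x \<in> int_span K v" "\<And>k. k \<in> K \<Longrightarrow> v k i = 0"
  shows "x i = 0"
  using assms unfolding int_span_def by auto

lemma rat_common_denominator:
  fixes r :: "'k \<Rightarrow> rat"
  assumes "finite K"
  shows "\<exists>D::int. D > 0 \<and> (\<forall>k\<in>K. of_int D * r k \<in> \<int>)"
  using assms
proof (induction K rule: finite_induct)
  case empty
  show ?case by (intro exI[of _ 1]) simp
next
  case (insert k K)
  then obtain D where D: "D > 0" "\<forall>k\<in>K. of_int D * r k \<in> \<int>"
    by blast
  obtain a b where ab: "quotient_of (r k) = (a, b)"
    by fastforce
  have "b > 0" "r k = of_int a / of_int b"
    using quotient_of_denom_pos[OF ab] quotient_of_div[OF ab] by simp_all
  then have "of_int (D * b) * r k = of_int (D * a)"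
    by simp
  moreover have "of_int (D * b) * r k' = of_int b * (of_int D * r k')" for k'
    by (simp add: ac_simps)
  ultimately have "\<forall>k'\<in>insert k K. of_int (D * b) * r k' \<in> \<int>"
    using D(2) by (metis Ints_mult Ints_of_int insertE)
  then show ?case
    using D(1) \<open>b > 0\<close> by (intro exI[of _ "D * b"]) simp
qed

lemma Gcd_image_int_lincomb:
  fixes z :: "'k \<Rightarrow> int"
  assumes "finite K"
  shows "\<exists>c. (\<Sum>k\<in>K. c k * z k) = Gcd (z ` K)"
  using assms
proof (induction K rule: finite_induct)
  case empty
  show ?case by simp
next
  case (insert k K)
  then obtain c where c: "(\<Sum>k\<in>K. c k * z k) = Gcd (z ` K)"
    by blast
  obtain u v where uv: "u * z k + v * Gcd (z ` K) = gcd (z k) (Gcd (z ` K))"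
    using bezout_int by blast
  define c' where "c' = (\<lambda>j. if j = k then u else v * c j)"
  have "(\<Sum>j\<in>insert k K. c' j * z j) = u * z k + (\<Sum>j\<in>K. v * c j * z j)"
    using insert.hyps by (auto simp: c'_def intro!: sum.cong)
  also have "(\<Sum>j\<in>K. v * c j * z j) = v * Gcd (z ` K)"
    using c by (simp add: sum_distrib_left[symmetric] mult.assoc)
  finally show ?case
    using uv by (intro exI[of _ c']) simp
qed

text \<open>Finitely generated subgroups of \<open>\<rat>\<close> are cyclic.\<close>
lemma rat_finite_family_int_multiples:
  fixes r :: "'k \<Rightarrow> rat"
  assumes "finite K"
  shows "\<exists>c::'k \<Rightarrow> int. \<forall>k\<in>K. \<exists>t::int. r k = of_int t * (\<Sum>j\<in>K. of_int (c j) * r j)"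
proof -
  obtain D :: int where D: "D > 0" "\<forall>k\<in>K. of_int D * r k \<in> \<int>"
    using rat_common_denominator[OF assms] by blast
  have "\<forall>k\<in>K. \<exists>z::int. r k = of_int z / of_int D"
  proof
    fix k assume "k \<in> K"
    then obtain z where "of_int D * r k = of_int z"
      using D(2) Ints_cases by metis
    then show "\<exists>z::int. r k = of_int z / of_int D"
      using D(1) by (intro exI[of _ z]) (simp add: field_simps)
  qed
  then obtain z :: "'k \<Rightarrow> int" where z: "\<And>k. k \<in> K \<Longrightarrow> r k = of_int (z k) / of_int D"
    by metis
  obtain c where c: "(\<Sum>k\<in>K. c k * z k) = Gcd (z ` K)"
    using Gcd_image_int_lincomb[OF assms] by blast
  have "(\<Sum>j\<in>K. of_int (c j) * r j) = of_int (Gcd (z ` K)) / of_int D"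
    using z by (simp add: c[symmetric] sum_divide_distrib)
  moreover have "r k = of_int (z k div Gcd (z ` K)) * (of_int (Gcd (z ` K)) / of_int D)"
    if "k \<in> K" for k
  proof -
    have "z k = z k div Gcd (z ` K) * Gcd (z ` K)"
      using that by simp
    then have "of_int (z k) = (of_int (z k div Gcd (z ` K)) * of_int (Gcd (z ` K)) :: rat)"
      by (metis of_int_mult)
    then show ?thesis
      using z[OF that] by simp
  qed
  ultimately have "\<forall>k\<in>K. \<exists>t::int. r k = of_int t * (\<Sum>j\<in>K. of_int (c j) * r j)"
    by auto
  then show ?thesis
    by (rule exI[of _ c])
qed

definition rat_independent :: "'j set \<Rightarrow> ('j \<Rightarrow> 'i \<Rightarrow> rat) \<Rightarrow> bool" where
  "rat_independent J b \<longleftrightarrow> (\<forall>a. (\<forall>x. (\<Sum>j\<in>J. a j * b j x) = 0) \<longrightarrow> (\<forall>j\<in>J. a j = 0))"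

lemma rat_independent_coeffs_unique:
  assumes "finite J" "rat_independent J b" "\<And>x. (\<Sum>j\<in>J. a j * b j x) = (\<Sum>j\<in>J. a' j * b j x)" "j \<in> J"
  shows "a j = a' j"
proof -
  have "(\<Sum>j\<in>J. (a j - a' j) * b j x) = 0" for x
    using assms(3)[of x] by (simp add: left_diff_distrib sum_subtractf)
  then show ?thesis
    using assms(2,4) unfolding rat_independent_def by fastforce
qed

lemma rat_independent_insert_pivot:
  fixes b :: "'i \<Rightarrow> 'i \<Rightarrow> rat"
  assumes "finite J" "i \<notin> J" "rat_independent J b" "\<And>j. j \<in> J \<Longrightarrow> b j i = 0" "m i \<noteq> 0"
  shows "rat_independent (insert i J) (b(i := m))"
  unfolding rat_independent_def
proof (intro allI impI)
  fix a :: "'i \<Rightarrow> rat"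
  assume a: "\<forall>x. (\<Sum>j\<in>insert i J. a j * (b(i := m)) j x) = 0"
  have split: "(\<Sum>j\<in>insert i J. a j * (b(i := m)) j x) = a i * m x + (\<Sum>j\<in>J. a j * b j x)" for x
    using assms(1,2) by (auto intro!: sum.cong)
  have "a i * m i = 0"
    using a split[of i] assms(4) by simp
  then have "a i = 0"
    using assms(5) by simp
  then have "\<forall>j\<in>J. a j = 0"
    using a split assms(3) unfolding rat_independent_def by simp
  with \<open>a i = 0\<close> show "\<forall>j\<in>insert i J. a j = 0"
    by simp
qed

lemma int_span_insert_pivot:
  assumes "finite K" "finite J" "i \<notin> J" "m \<in> int_span K v"
    and span_w: "int_span K (\<lambda>k x. v k x - of_int (t k) * m x) = int_span J b"
  shows "int_span K v = int_span (insert i J) (b(i := m))"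
proof -
  define w where "w = (\<lambda>k x. v k x - of_int (t k) * m x)"
  define b' where "b' = b(i := m)"
  have v_eq: "v k = (\<lambda>x. w k x + of_int (t k) * m x)"
    and w_eq: "w k = (\<lambda>x. v k x + of_int (- t k) * m x)" for k
    unfolding w_def by auto
  have "b' j = b j" if "j \<in> J" for j
    using that assms(3) unfolding b'_def by auto
  then have "b j \<in> int_span (insert i J) b'" if "j \<in> J" for j
    using int_span_generator[of "insert i J" j b'] that assms(2) by simp
  then have span_b: "int_span J b \<subseteq> int_span (insert i J) b'"
    using assms(2) by (rule int_span_subset[rotated])
  have m_span: "m \<in> int_span (insert i J) b'"
    using int_span_generator[of "insert i J" i b'] assms(2) unfolding b'_def by simp
  have "w k \<in> int_span K v" if "k \<in> K" for k
    unfolding w_eq using that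
    by (intro int_span_add int_span_int_smult assms(4) int_span_generator assms(1))
  then have span_w': "int_span J b \<subseteq> int_span K v"
    using assms(1) span_w unfolding w_def[symmetric] by (auto dest: int_span_subset)
  have "int_span K v \<subseteq> int_span (insert i J) b'"
  proof (rule int_span_subset[OF assms(1)])
    fix k assume "k \<in> K"
    then have "w k \<in> int_span (insert i J) b'"
      using int_span_generator[OF assms(1)] span_b span_w unfolding w_def by blast
    then show "v k \<in> int_span (insert i J) b'"
      unfolding v_eq by (intro int_span_add int_span_int_smult m_span)
  qed
  moreover have "int_span (insert i J) b' \<subseteq> int_span K v"
  proof (rule int_span_subset)
    fix j assume "j \<in> insert i J"
    then show "b' j \<in> int_span K v"
      using assms(3,4) int_span_generator[OF assms(2)] span_w' unfolding b'_def by auto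
  qed (use assms(2) in simp)
  ultimately show ?thesis
    unfolding b'_def by blast
qed

text \<open>Hermite-style elimination, one coordinate at a time: a finitely generated
  subgroup of \<open>\<rat>\<^sup>I\<close> is free on a \<open>\<rat>\<close>-linearly independent family.\<close>
lemma int_span_independent_basis:
  fixes v :: "'k \<Rightarrow> 'i \<Rightarrow> rat"
  assumes "finite I" "finite K" "\<And>k x. k \<in> K \<Longrightarrow> x \<notin> I \<Longrightarrow> v k x = 0"
  shows "\<exists>J b. J \<subseteq> I \<and> int_span K v = int_span J b \<and> rat_independent J b"
  using assms(1,3)
proof (induction I arbitrary: v rule: finite_induct)
  case empty
  then have "int_span K v = int_span {} (\<lambda>_ _. 0 :: rat)"
    unfolding int_span_def by auto
  moreover have "rat_independent {} (\<lambda>_ _. 0 :: rat)"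
    unfolding rat_independent_def by simp
  ultimately show ?case
    by (intro exI[of _ "{}"] exI[of _ "\<lambda>_ _. 0 :: rat"]) simp
next
  case (insert i I)
  obtain c where "\<forall>k\<in>K. \<exists>t::int. v k i = of_int t * (\<Sum>j\<in>K. of_int (c j) * v j i)"
    using rat_finite_family_int_multiples[OF assms(2), of "\<lambda>k. v k i"] by blast
  moreover define m where "m = (\<lambda>x. \<Sum>k\<in>K. of_int (c k) * v k x)"
  ultimately obtain t where t: "\<And>k. k \<in> K \<Longrightarrow> v k i = of_int (t k) * m i"
    by metis
  show ?case
  proof (cases "m i = 0")
    case True
    then have "v k x = 0" if "k \<in> K" "x \<notin> I" for k x
      using t[OF that(1)] insert.prems[OF that(1)] that(2) by (cases "x = i") simp_all
    from insert.IH[of v, OF this] obtain J b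
      where "J \<subseteq> I" "int_span K v = int_span J b" "rat_independent J b"
      by blast
    then show ?thesis
      by (intro exI[of _ J] exI[of _ b]) auto
  next
    case False
    define w where "w = (\<lambda>k x. v k x - of_int (t k) * m x)"
    have w_i: "w k i = 0" if "k \<in> K" for k
      using t[OF that] unfolding w_def by simp
    have "m x = 0" if "x \<notin> insert i I" for x
      unfolding m_def using insert.prems that by simp
    then have "w k x = 0" if "k \<in> K" "x \<notin> I" for k x
      using that w_i insert.prems[of k x] unfolding w_def by (cases "x = i") auto
    from insert.IH[of w, OF this] obtain J b where J: "J \<subseteq> I"
      and span_w: "int_span K w = int_span J b" and indep: "rat_independent J b"
      by blast
    have "finite J" "i \<notin> J"
      using J insert.hyps finite_subset by auto
    have "m \<in> int_span K v"
      unfolding m_def by (rule int_span_memI) (rule refl)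
    with assms(2) \<open>finite J\<close> \<open>i \<notin> J\<close> have "int_span K v = int_span (insert i J) (b(i := m))"
      using span_w unfolding w_def by (rule int_span_insert_pivot)
    moreover have "b j i = 0" if "j \<in> J" for j
      using int_span_coordinate_vanishes[of "b j" K w i] w_i that span_w
        int_span_generator[OF \<open>finite J\<close>] by blast
    then have "rat_independent (insert i J) (b(i := m))"
      using \<open>finite J\<close> \<open>i \<notin> J\<close> indep False by (intro rat_independent_insert_pivot)
    ultimately show ?thesis
      using J by (intro exI[of _ "insert i J"] exI[of _ "b(i := m)"]) blast
  qed
qed

section \<open>Traces of maps preserving a lattice\<close>

lemma sum_mult_lincomb_swap:
  fixes l :: "'x \<Rightarrow> 'a::comm_semiring_0"
  shows "(\<Sum>x\<in>X. l x * (\<Sum>j\<in>J. c j * f j x)) = (\<Sum>j\<in>J. c j * (\<Sum>x\<in>X. l x * f j x))"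
proof -
  have "(\<Sum>x\<in>X. l x * (\<Sum>j\<in>J. c j * f j x)) = (\<Sum>x\<in>X. \<Sum>j\<in>J. c j * (l x * f j x))"
    by (simp add: sum_distrib_left ac_simps)
  also have "\<dots> = (\<Sum>j\<in>J. \<Sum>x\<in>X. c j * (l x * f j x))"
    by (rule sum.swap)
  finally show ?thesis
    by (simp add: sum_distrib_left)
qed

lemma independent_basis_dual:
  fixes b :: "'j \<Rightarrow> 'i::finite \<Rightarrow> rat" and C :: "'i \<Rightarrow> 'j \<Rightarrow> int"
  assumes "finite J" "rat_independent J b"
    and C: "\<And>i. (\<lambda>x. if x = i then 1 else 0) = (\<lambda>x. \<Sum>j\<in>J. of_int (C i j) * b j x)"
    and "k \<in> J" "j \<in> J"
  shows "(\<Sum>i\<in>UNIV. of_int (C i j) * b k i) = (if j = k then 1 else 0)"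
proof -
  have "(\<Sum>j\<in>J. (\<Sum>i\<in>UNIV. of_int (C i j) * b k i) * b j x)
      = (\<Sum>j\<in>J. (if j = k then 1 else 0) * b j x)" for x
  proof -
    have "(\<Sum>j\<in>J. (\<Sum>i\<in>UNIV. of_int (C i j) * b k i) * b j x)
        = (\<Sum>j\<in>J. \<Sum>i\<in>UNIV. of_int (C i j) * b k i * b j x)"
      by (simp add: sum_distrib_right)
    also have "\<dots> = (\<Sum>i\<in>UNIV. \<Sum>j\<in>J. of_int (C i j) * b k i * b j x)"
      by (rule sum.swap)
    also have "\<dots> = (\<Sum>i\<in>UNIV. b k i * (\<Sum>j\<in>J. of_int (C i j) * b j x))"
      by (simp add: sum_distrib_left ac_simps)
    also have "\<dots> = (\<Sum>i\<in>UNIV. b k i * (if x = i then 1 else 0))"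
      using C by metis
    also have "\<dots> = b k x"
      by (simp add: if_distrib cong: if_cong)
    also have "\<dots> = (\<Sum>j\<in>J. if j = k then b j x else 0)"
      using assms(1,4) by simp
    also have "\<dots> = (\<Sum>j\<in>J. (if j = k then 1 else 0) * b j x)"
      by (rule sum.cong) auto
    finally show ?thesis .
  qed
  then show ?thesis
    by (rule rat_independent_coeffs_unique[OF assms(1,2) _ assms(5)])
qed

text \<open>In the basis \<open>b\<close> the trace becomes that of the integer matrix of the map.\<close>
lemma trace_in_Ints_if_preserves_independent_int_span:
  fixes l :: "'i::finite \<Rightarrow> 'i \<Rightarrow> rat" and b :: "'j \<Rightarrow> 'i \<Rightarrow> rat"
  assumes "finite J" "rat_independent J b"
    and units: "\<And>i. (\<lambda>x. if x = i then 1 else 0) \<in> int_span J b"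
    and preserves: "\<And>x. x \<in> int_span J b \<Longrightarrow> (\<lambda>i. \<Sum>j\<in>UNIV. l i j * x j) \<in> int_span J b"
  shows "(\<Sum>i\<in>UNIV. l i i) \<in> \<int>"
proof -
  define L where "L x = (\<lambda>i. \<Sum>j\<in>UNIV. l i j * x j)" for x :: "'i \<Rightarrow> rat"
  have "\<forall>j\<in>J. \<exists>A::'j \<Rightarrow> int. L (b j) = (\<lambda>i. \<Sum>k\<in>J. of_int (A k) * b k i)"
    using preserves int_span_generator[OF assms(1)] unfolding L_def int_span_def by blast
  then obtain A :: "'j \<Rightarrow> 'j \<Rightarrow> int"
    where A: "\<forall>j\<in>J. L (b j) = (\<lambda>i. \<Sum>k\<in>J. of_int (A j k) * b k i)"
    by metis
  have "\<forall>i. \<exists>C::'j \<Rightarrow> int. (\<lambda>x. if x = i then 1 else 0) = (\<lambda>x. \<Sum>j\<in>J. of_int (C j) * b j x)"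
    using units unfolding int_span_def by blast
  then obtain C :: "'i \<Rightarrow> 'j \<Rightarrow> int"
    where C: "\<And>i. (\<lambda>x. if x = i then 1 else 0) = (\<lambda>x. \<Sum>j\<in>J. of_int (C i j) * b j x)"
    by metis
  have unit_diag: "L (\<lambda>x. if x = i then 1 else 0) i = l i i" for i
  proof -
    have "L (\<lambda>x. if x = i then 1 else 0) i = (\<Sum>j\<in>UNIV. if j = i then l i j else 0)"
      unfolding L_def by (rule sum.cong) auto
    then show ?thesis
      by simp
  qed
  have "(\<Sum>i\<in>UNIV. l i i) = (\<Sum>i\<in>UNIV. L (\<lambda>x. if x = i then 1 else 0) i)"
    by (simp only: unit_diag)
  also have "\<dots> = (\<Sum>i\<in>UNIV. \<Sum>j\<in>J. of_int (C i j) * L (b j) i)"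
    unfolding C L_def by (rule sum.cong[OF refl], rule sum_mult_lincomb_swap)
  also have "\<dots> = (\<Sum>i\<in>UNIV. \<Sum>j\<in>J. of_int (C i j) * (\<Sum>k\<in>J. of_int (A j k) * b k i))"
    using A by (intro sum.cong refl) simp
  also have "\<dots> = (\<Sum>j\<in>J. \<Sum>i\<in>UNIV. of_int (C i j) * (\<Sum>k\<in>J. of_int (A j k) * b k i))"
    by (rule sum.swap)
  also have "\<dots> = (\<Sum>j\<in>J. \<Sum>k\<in>J. of_int (A j k) * (\<Sum>i\<in>UNIV. of_int (C i j) * b k i))"
    by (rule sum.cong[OF refl], rule sum_mult_lincomb_swap)
  also have "\<dots> = (\<Sum>j\<in>J. \<Sum>k\<in>J. if k = j then of_int (A j k) else 0)"
    using independent_basis_dual[OF assms(1,2) C] by (intro sum.cong refl) simp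
  also have "\<dots> = (\<Sum>j\<in>J. of_int (A j j))"
    using assms(1) by simp
  also have "\<dots> \<in> \<int>"
    by (simp add: Ints_sum)
  finally show ?thesis .
qed

lemma trace_in_Ints_if_preserves_int_span:
  fixes l :: "'i::finite \<Rightarrow> 'i \<Rightarrow> rat" and v :: "'k \<Rightarrow> 'i \<Rightarrow> rat"
  assumes "finite K"
    and "\<And>i. (\<lambda>x. if x = i then 1 else 0) \<in> int_span K v"
    and "\<And>x. x \<in> int_span K v \<Longrightarrow> (\<lambda>i. \<Sum>j\<in>UNIV. l i j * x j) \<in> int_span K v"
  shows "(\<Sum>i\<in>UNIV. l i i) \<in> \<int>"
proof -
  obtain J and b :: "'i \<Rightarrow> 'i \<Rightarrow> rat" where "int_span K v = int_span J b" "rat_independent J b"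
    using int_span_independent_basis[of UNIV K v] assms(1) by auto
  then show ?thesis
    using assms(2,3) by (intro trace_in_Ints_if_preserves_independent_int_span) simp_all
qed

section \<open>The group algebra and the conductor\<close>

definition gr_delta :: "'a::{ab_group_add,finite} \<Rightarrow> 'a \<Rightarrow> rat" where
  "gr_delta a = (\<lambda>g. if g = a then 1 else 0)"

lemma gr_mult_commute: "gr_mult x y = gr_mult y x"
proof
  fix g
  show "gr_mult x y g = gr_mult y x g"
    unfolding gr_mult_def
    by (rule sum.reindex_bij_witness[of _ "\<lambda>h. g - h" "\<lambda>h. g - h"]) (auto simp: mult.commute)
qed

lemma gr_mult_assoc: "gr_mult (gr_mult x y) z = gr_mult x (gr_mult y z)"
proof
  fix g
  have "gr_mult (gr_mult x y) z g = (\<Sum>h\<in>UNIV. \<Sum>k\<in>UNIV. x k * y (h - k) * z (g - h))"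
    unfolding gr_mult_def by (simp add: sum_distrib_right)
  also have "\<dots> = (\<Sum>k\<in>UNIV. \<Sum>h\<in>UNIV. x k * y (h - k) * z (g - h))"
    by (rule sum.swap)
  also have "\<dots> = (\<Sum>k\<in>UNIV. x k * (\<Sum>m\<in>UNIV. y m * z (g - k - m)))"
  proof (rule sum.cong[OF refl])
    fix k
    have "(\<Sum>h\<in>UNIV. x k * y (h - k) * z (g - h)) = (\<Sum>m\<in>UNIV. x k * y m * z (g - k - m))"
      by (rule sum.reindex_bij_witness[of _ "\<lambda>m. k + m" "\<lambda>h. h - k"]) (auto simp: diff_diff_eq)
    then show "(\<Sum>h\<in>UNIV. x k * y (h - k) * z (g - h)) = x k * (\<Sum>m\<in>UNIV. y m * z (g - k - m))"
      by (simp add: sum_distrib_left mult.assoc)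
  qed
  also have "\<dots> = gr_mult x (gr_mult y z) g"
    unfolding gr_mult_def by simp
  finally show "gr_mult (gr_mult x y) z g = gr_mult x (gr_mult y z) g" .
qed

lemma gr_mult_delta_left: "gr_mult (gr_delta a) x = (\<lambda>g. x (g - a))"
proof
  fix g
  have "gr_mult (gr_delta a) x g = (\<Sum>h\<in>UNIV. if h = a then x (g - h) else 0)"
    unfolding gr_mult_def gr_delta_def by (rule sum.cong) auto
  then show "gr_mult (gr_delta a) x g = x (g - a)"
    by simp
qed

lemma gr_mult_delta_right: "gr_mult x (gr_delta a) = (\<lambda>g. x (g - a))"
  by (subst gr_mult_commute) (rule gr_mult_delta_left)

lemma gr_one_eq_delta: "gr_one = gr_delta 0"
  unfolding gr_one_def gr_delta_def by simp

lemma gr_mult_one_right: "gr_mult x gr_one = x"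
  unfolding gr_one_eq_delta gr_mult_delta_right by simp

lemma gr_mult_ZG: "x \<in> ZG \<Longrightarrow> y \<in> ZG \<Longrightarrow> gr_mult x y \<in> ZG"
  unfolding ZG_def gr_mult_def by (auto intro!: Ints_sum Ints_mult)

lemma gr_one_ZG: "gr_one \<in> ZG"
  unfolding ZG_def gr_one_def by simp

lemma ZG_subset_SG: "ZG \<subseteq> SG"
proof
  fix x :: "'a \<Rightarrow> rat"
  assume x: "x \<in> ZG"
  then have "(\<lambda>g. - x g) \<in> ZG"
    unfolding ZG_def by simp
  moreover have "gr_pow x 1 g + (\<Sum>k<1. gr_mult (\<lambda>g. - x g) (gr_pow x k) g) = 0" for g
    by (simp add: gr_mult_one_right)
  ultimately show "x \<in> SG"
    unfolding SG_def integral_over_def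
    by (intro CollectI exI[of _ 1] exI[of _ "\<lambda>_ g. - x g"]) simp
qed

lemma conductor_subset_ZG: "conductor \<subseteq> ZG"
proof
  fix s :: "'a \<Rightarrow> rat"
  assume "s \<in> conductor"
  then have "gr_mult s gr_one \<in> ZG"
    using ZG_subset_SG gr_one_ZG unfolding conductor_def by blast
  then show "s \<in> ZG"
    by (simp only: gr_mult_one_right)
qed

lemma gr_mult_int_span:
  assumes "finite K" "\<And>k. k \<in> K \<Longrightarrow> gr_mult w (v k) \<in> int_span K v" "x \<in> int_span K v"
  shows "gr_mult w x \<in> int_span K v"
proof -
  obtain c where x: "x = (\<lambda>g. \<Sum>k\<in>K. of_int (c k) * v k g)"
    using assms(3) unfolding int_span_def by blast
  have "gr_mult w x = (\<lambda>g. \<Sum>k\<in>K. of_int (c k) * gr_mult w (v k) g)"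
    unfolding x gr_mult_def by (rule ext) (rule sum_mult_lincomb_swap)
  then show ?thesis
    by (simp only:) (rule int_span_lincomb[OF assms(1) assms(2)])
qed

text \<open>The trace of multiplication by \<open>w\<close> on \<open>\<rat>[G]\<close>, in the basis of group elements, is \<open>|G| w(0)\<close>.\<close>
lemma card_times_coeff_in_Ints_if_mult_preserves_int_span:
  fixes w :: "'a::{ab_group_add,finite} \<Rightarrow> rat"
  assumes "finite K" "\<And>a. gr_delta a \<in> int_span K v"
    and "\<And>k. k \<in> K \<Longrightarrow> gr_mult w (v k) \<in> int_span K v"
  shows "of_nat CARD('a) * w 0 \<in> \<int>"
proof -
  have "(\<lambda>x. if x = i then 1 else 0) \<in> int_span K v" for i
    using assms(2)[of i] unfolding gr_delta_def .
  moreover have "(\<lambda>i. \<Sum>j\<in>UNIV. w (i - j) * x j) \<in> int_span K v" if "x \<in> int_span K v" for x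
  proof -
    have "(\<lambda>i. \<Sum>j\<in>UNIV. w (i - j) * x j) = gr_mult w x"
      unfolding gr_mult_commute[of w] unfolding gr_mult_def by (simp add: mult.commute)
    then show ?thesis
      using gr_mult_int_span[OF assms(1,3) that] by simp
  qed
  ultimately have "(\<Sum>i\<in>UNIV. w (i - i)) \<in> \<int>"
    using trace_in_Ints_if_preserves_int_span[OF assms(1), where l = "\<lambda>i j. w (i - j)"] by blast
  then show ?thesis
    by simp
qed

definition shifted_powers :: "('a::{ab_group_add,finite} \<Rightarrow> rat) \<Rightarrow> 'a \<times> nat \<Rightarrow> 'a \<Rightarrow> rat" where
  "shifted_powers s = (\<lambda>(a, k) g. gr_pow s k (g - a))"

lemma shifted_powers_in_span:
  "k < n \<Longrightarrow> shifted_powers s (a, k) \<in> int_span (UNIV \<times> {..<n}) (shifted_powers s)"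
  by (rule int_span_generator) auto

lemma gr_delta_in_shifted_powers_span:
  assumes "n \<noteq> 0"
  shows "gr_delta a \<in> int_span (UNIV \<times> {..<n}) (shifted_powers s)"
proof -
  have "gr_delta a = shifted_powers s (a, 0)"
    by (simp add: shifted_powers_def gr_delta_def gr_one_def)
  then show ?thesis
    using shifted_powers_in_span assms by simp
qed

lemma gr_mult_delta_shifted_powers_in_span:
  assumes "kk \<in> UNIV \<times> {..<n}"
  shows "gr_mult (gr_delta b) (shifted_powers s kk) \<in> int_span (UNIV \<times> {..<n}) (shifted_powers s)"
proof -
  obtain a k where "kk = (a, k)" "k < n"
    using assms by auto
  moreover have "gr_mult (gr_delta b) (shifted_powers s (a, k)) = shifted_powers s (a + b, k)"
    unfolding gr_mult_delta_left shifted_powers_def by (simp add: algebra_simps)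
  ultimately show ?thesis
    using shifted_powers_in_span by simp
qed

lemma shifted_powers_degree_in_span:
  assumes "\<forall>k<n. c k \<in> ZG" "\<And>x. gr_pow s n x + (\<Sum>k<n. gr_mult (c k) (gr_pow s k) x) = 0"
  shows "shifted_powers s (a, n) \<in> int_span (UNIV \<times> {..<n}) (shifted_powers s)"
proof -
  define z where "z = (\<lambda>k h. \<lfloor>c k h\<rfloor>)"
  have z: "c k h = of_int (z k h)" if "k < n" for k h
    using assms(1) that unfolding ZG_def z_def by auto
  have "shifted_powers s (a, n) x
      = (\<Sum>hk\<in>UNIV \<times> {..<n}. of_int (- z (snd hk) (fst hk)) * shifted_powers s (a + fst hk, snd hk) x)"
    for x
  proof -
    have "shifted_powers s (a, n) x = - (\<Sum>k<n. \<Sum>h\<in>UNIV. of_int (z k h) * gr_pow s k (x - a - h))"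
      using assms(2)[of "x - a"] z unfolding gr_mult_def shifted_powers_def
      by (simp add: eq_neg_iff_add_eq_0)
    also have "\<dots> = (\<Sum>h\<in>UNIV. \<Sum>k<n. of_int (- z k h) * shifted_powers s (a + h, k) x)"
      unfolding shifted_powers_def by (subst sum.swap) (simp add: sum_negf algebra_simps)
    finally show ?thesis
      by (simp add: sum.cartesian_product case_prod_beta)
  qed
  then have "shifted_powers s (a, n)
      = (\<lambda>x. \<Sum>hk\<in>UNIV \<times> {..<n}. of_int (- z (snd hk) (fst hk)) * shifted_powers s (a + fst hk, snd hk) x)"
    by (rule ext)
  then show ?thesis
    by (simp only:) (rule int_span_lincomb, auto intro: shifted_powers_in_span)
qed

lemma gr_mult_shifted_powers_in_span:
  assumes "\<forall>k<n. c k \<in> ZG" "\<And>x. gr_pow s n x + (\<Sum>k<n. gr_mult (c k) (gr_pow s k) x) = 0"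
    and "kk \<in> UNIV \<times> {..<n}"
  shows "gr_mult s (shifted_powers s kk) \<in> int_span (UNIV \<times> {..<n}) (shifted_powers s)"
proof -
  obtain a k where kk: "kk = (a, k)" "k < n"
    using assms(3) by auto
  have "shifted_powers s (a, k) = gr_mult (gr_delta a) (gr_pow s k)"
    unfolding shifted_powers_def gr_mult_delta_left by simp
  then have "gr_mult s (shifted_powers s (a, k)) = gr_mult (gr_mult s (gr_delta a)) (gr_pow s k)"
    by (simp only: gr_mult_assoc)
  also have "\<dots> = gr_mult (gr_delta a) (gr_pow s (Suc k))"
    by (simp only: gr_mult_commute[of s] gr_mult_assoc gr_pow.simps)
  also have "\<dots> = shifted_powers s (a, Suc k)"
    unfolding shifted_powers_def gr_mult_delta_left by simp
  finally have "gr_mult s (shifted_powers s kk) = shifted_powers s (a, Suc k)"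
    unfolding kk .
  moreover have "shifted_powers s (a, Suc k) \<in> int_span (UNIV \<times> {..<n}) (shifted_powers s)"
  proof (cases "Suc k < n")
    case True
    then show ?thesis
      by (rule shifted_powers_in_span)
  next
    case False
    with kk(2) have "Suc k = n"
      by simp
    then show ?thesis
      using shifted_powers_degree_in_span[OF assms(1,2)] by simp
  qed
  ultimately show ?thesis
    by simp
qed

lemma SG_card_times_in_Ints:
  fixes s :: "'a::{ab_group_add,finite} \<Rightarrow> rat"
  assumes "s \<in> SG"
  shows "of_nat CARD('a) * s g \<in> \<int>"
proof -
  obtain n c where c: "\<forall>k<n. c k \<in> ZG"
    and monic: "\<And>x. gr_pow s n x + (\<Sum>k<n. gr_mult (c k) (gr_pow s k) x) = 0"
    using assms unfolding SG_def integral_over_def by blast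
  have "n \<noteq> 0"
  proof
    assume "n = 0"
    then show False
      using monic[of 0] by (simp add: gr_one_def)
  qed
  define w where "w = gr_mult (gr_delta (- g)) s"
  have "of_nat CARD('a) * w 0 \<in> \<int>"
  proof (rule card_times_coeff_in_Ints_if_mult_preserves_int_span)
    show "gr_delta a \<in> int_span (UNIV \<times> {..<n}) (shifted_powers s)" for a
      using \<open>n \<noteq> 0\<close> by (rule gr_delta_in_shifted_powers_span)
    fix kk :: "'a \<times> nat"
    assume kk: "kk \<in> UNIV \<times> {..<n}"
    have "gr_mult w (shifted_powers s kk) = gr_mult (gr_delta (- g)) (gr_mult s (shifted_powers s kk))"
      unfolding w_def by (rule gr_mult_assoc)
    also have "\<dots> \<in> int_span (UNIV \<times> {..<n}) (shifted_powers s)"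
      using _ gr_mult_delta_shifted_powers_in_span gr_mult_shifted_powers_in_span[OF c monic kk]
      by (rule gr_mult_int_span) simp
    finally show "gr_mult w (shifted_powers s kk) \<in> int_span (UNIV \<times> {..<n}) (shifted_powers s)" .
  qed simp
  moreover have "w 0 = s g"
    unfolding w_def gr_mult_delta_left by simp
  ultimately show ?thesis
    by simp
qed

lemma card_smult_ZG_in_conductor:
  fixes a :: "'a::{ab_group_add,finite} \<Rightarrow> rat"
  assumes "a \<in> ZG"
  shows "(\<lambda>g. of_nat CARD('a) * a g) \<in> conductor"
proof -
  have "(\<lambda>g. of_nat CARD('a) * a g) \<in> ZG"
    using assms unfolding ZG_def by simp
  moreover have "gr_mult (\<lambda>g. of_nat CARD('a) * a g) t \<in> ZG" if "t \<in> SG" for t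
  proof -
    have "(\<lambda>g. of_nat CARD('a) * t g) \<in> ZG"
      using SG_card_times_in_Ints[OF that] unfolding ZG_def by blast
    moreover have "gr_mult (\<lambda>g. of_nat CARD('a) * a g) t = gr_mult a (\<lambda>g. of_nat CARD('a) * t g)"
      unfolding gr_mult_def by (simp add: sum_distrib_left ac_simps)
    ultimately show ?thesis
      using gr_mult_ZG[OF assms] by simp
  qed
  ultimately show ?thesis
    using ZG_subset_SG unfolding conductor_def by blast
qed

section \<open>Tensor products\<close>

lemma sum_lessThan_add_split: "(\<Sum>i<m + n. f i) = (\<Sum>i<m. f i) + (\<Sum>i<n. f (m + i))"
  for f :: "nat \<Rightarrow> 'a::comm_monoid_add"
  by (induction n) (simp_all add: add.assoc)

lemma tensor_memI:
  fixes n :: nat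
  assumes "\<forall>i<n. a i \<in> A \<and> b i \<in> B" "x = (\<lambda>z. \<Sum>i<n. of_int (k i) * a i (fst z) * b i (snd z))"
  shows "x \<in> tensor A B"
  using assms unfolding tensor_def by blast

lemma tensor_memE:
  assumes "x \<in> tensor A B"
  obtains n :: nat and k a b where "\<forall>i<n. a i \<in> A \<and> b i \<in> B"
    "x = (\<lambda>z. \<Sum>i<n. of_int (k i) * a i (fst z) * b i (snd z))"
  using assms unfolding tensor_def by blast

lemma tensor_mono: "A \<subseteq> A' \<Longrightarrow> B \<subseteq> B' \<Longrightarrow> tensor A B \<subseteq> tensor A' B'"
  unfolding tensor_def by blast

lemma tensor_add:
  assumes "x \<in> tensor A B" "y \<in> tensor A B"
  shows "(\<lambda>z. x z + y z) \<in> tensor A B"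
proof -
  obtain n1 :: nat and k1 a1 b1 where 1: "\<forall>i<n1. a1 i \<in> A \<and> b1 i \<in> B"
    "x = (\<lambda>z. \<Sum>i<n1. of_int (k1 i) * a1 i (fst z) * b1 i (snd z))"
    using assms(1) by (rule tensor_memE)
  obtain n2 :: nat and k2 a2 b2 where 2: "\<forall>i<n2. a2 i \<in> A \<and> b2 i \<in> B"
    "y = (\<lambda>z. \<Sum>i<n2. of_int (k2 i) * a2 i (fst z) * b2 i (snd z))"
    using assms(2) by (rule tensor_memE)
  define k where "k i = (if i < n1 then k1 i else k2 (i - n1))" for i
  define a where "a i = (if i < n1 then a1 i else a2 (i - n1))" for i
  define b where "b i = (if i < n1 then b1 i else b2 (i - n1))" for i
  have "\<forall>i<n1 + n2. a i \<in> A \<and> b i \<in> B"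
    using 1(1) 2(1) unfolding a_def b_def by auto
  moreover have "(\<lambda>z. x z + y z) = (\<lambda>z. \<Sum>i<n1 + n2. of_int (k i) * a i (fst z) * b i (snd z))"
    unfolding sum_lessThan_add_split 1(2) 2(2) k_def a_def b_def by simp
  ultimately show ?thesis
    by (rule tensor_memI)
qed

lemma tensor_int_smult:
  assumes "x \<in> tensor A B"
  shows "(\<lambda>z. of_int m * x z) \<in> tensor A B"
proof -
  obtain n :: nat and k a b where AB: "\<forall>i<n. a i \<in> A \<and> b i \<in> B"
    and x: "x = (\<lambda>z. \<Sum>i<n. of_int (k i) * a i (fst z) * b i (snd z))"
    using assms by (rule tensor_memE)
  have "(\<lambda>z. of_int m * x z) = (\<lambda>z. \<Sum>i<n. of_int (m * k i) * a i (fst z) * b i (snd z))"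
    unfolding x by (simp add: sum_distrib_left ac_simps)
  with AB show ?thesis
    by (rule tensor_memI)
qed

lemma tensor_smult_left:
  assumes "x \<in> tensor A B" "\<And>a. a \<in> A \<Longrightarrow> (\<lambda>g. c * a g) \<in> A'"
  shows "(\<lambda>z. c * x z) \<in> tensor A' B"
proof -
  obtain n :: nat and k a b where "\<forall>i<n. a i \<in> A \<and> b i \<in> B"
    and x: "x = (\<lambda>z. \<Sum>i<n. of_int (k i) * a i (fst z) * b i (snd z))"
    using assms(1) by (rule tensor_memE)
  then have "\<forall>i<n. (\<lambda>g. c * a i g) \<in> A' \<and> b i \<in> B"
    using assms(2) by blast
  moreover have "(\<lambda>z. c * x z) = (\<lambda>z. \<Sum>i<n. of_int (k i) * (\<lambda>g. c * a i g) (fst z) * b i (snd z))"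
    unfolding x by (simp add: sum_distrib_left ac_simps)
  ultimately show ?thesis
    by (rule tensor_memI)
qed

lemma tensor_smult_right:
  assumes "x \<in> tensor A B" "\<And>b. b \<in> B \<Longrightarrow> (\<lambda>g. c * b g) \<in> B'"
  shows "(\<lambda>z. c * x z) \<in> tensor A B'"
proof -
  obtain n :: nat and k a b where "\<forall>i<n. a i \<in> A \<and> b i \<in> B"
    and x: "x = (\<lambda>z. \<Sum>i<n. of_int (k i) * a i (fst z) * b i (snd z))"
    using assms(1) by (rule tensor_memE)
  then have "\<forall>i<n. a i \<in> A \<and> (\<lambda>g. c * b i g) \<in> B'"
    using assms(2) by blast
  moreover have "(\<lambda>z. c * x z) = (\<lambda>z. \<Sum>i<n. of_int (k i) * a i (fst z) * (\<lambda>g. c * b i g) (snd z))"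
    unfolding x by (simp add: sum_distrib_left ac_simps)
  ultimately show ?thesis
    by (rule tensor_memI)
qed

lemma tensor_conductor_eq_if_coprime_card:
  assumes "coprime CARD('a::{ab_group_add,finite}) CARD('b::{ab_group_add,finite})"
  shows "tensor (conductor :: ('a \<Rightarrow> rat) set) (conductor :: ('b \<Rightarrow> rat) set)
       = tensor ZG conductor \<inter> tensor conductor ZG" (is "?L = ?R")
proof
  show "?L \<subseteq> ?R"
    using tensor_mono[OF conductor_subset_ZG order_refl] tensor_mono[OF order_refl conductor_subset_ZG]
    by blast
next
  obtain u v where uv: "u * int CARD('a) + v * int CARD('b) = 1"
    using assms bezout_int[of "int CARD('a)" "int CARD('b)"] by (metis coprime_int_iff coprime_imp_gcd_eq_1)
  show "?R \<subseteq> ?L"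
  proof
    fix x :: "'a \<times> 'b \<Rightarrow> rat"
    assume "x \<in> tensor ZG conductor \<inter> tensor conductor ZG"
    then have x: "x \<in> tensor ZG conductor" "x \<in> tensor conductor ZG"
      by simp_all
    have "x = (\<lambda>z. of_int u * (of_nat CARD('a) * x z) + of_int v * (of_nat CARD('b) * x z))"
    proof
      fix z
      have "of_int u * (of_nat CARD('a) * x z) + of_int v * (of_nat CARD('b) * x z)
          = of_int (u * int CARD('a) + v * int CARD('b)) * x z"
        by (simp add: algebra_simps)
      then show "x z = of_int u * (of_nat CARD('a) * x z) + of_int v * (of_nat CARD('b) * x z)"
        using uv by simp
    qed
    also have "\<dots> \<in> tensor conductor conductor"
    proof (intro tensor_add tensor_int_smult)
      show "(\<lambda>z. of_nat CARD('a) * x z) \<in> tensor conductor conductor"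
        by (rule tensor_smult_left[OF x(1)]) (rule card_smult_ZG_in_conductor)
      show "(\<lambda>z. of_nat CARD('b) * x z) \<in> tensor conductor conductor"
        by (rule tensor_smult_right[OF x(2)]) (rule card_smult_ZG_in_conductor)
    qed
    finally show "x \<in> tensor conductor conductor" .
  qed
qed

theorem mainTheorem11:
  fixes p q e f :: nat
  assumes "prime p" and "prime q" and "p \<noteq> q"
    and "card (UNIV :: 'a::{ab_group_add,finite} set) = p ^ e"
    and "card (UNIV :: 'b::{ab_group_add,finite} set) = q ^ f"
  shows "tensor (conductor :: ('a \<Rightarrow> rat) set) (conductor :: ('b \<Rightarrow> rat) set)
       = tensor (ZG :: ('a \<Rightarrow> rat) set) (conductor :: ('b \<Rightarrow> rat) set)
         \<inter> tensor (conductor :: ('a \<Rightarrow> rat) set) (ZG :: ('b \<Rightarrow> rat) set)"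
proof (rule tensor_conductor_eq_if_coprime_card)
  have "coprime (p ^ e) (q ^ f)"
    using assms(1-3) by (simp add: primes_coprime)
  then show "coprime CARD('a) CARD('b)"
    using assms(4,5) by simp
qed

end
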